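(* Let $r,R>0$ satisfy $r<\underline{H}(\mathbf{X}|\mathbf{Y})$ and $r+R>\overline{H}(\mathbf{X})$. Then for every $\delta>0$ and all sufficiently large $n$ there exist $A\in\mathcal{A}_n$, $B\in\mathcal{B}_n$ and $\mathbf{c}\in\mathrm{Im}\mathcal{A}_n$ such that \[ \mathrm{Error}(A,B,\mathbf{c},D)\le P\bigl(d_n(X^n,Y^n)>D\bigr)+\delta . \]
   Context: Logarithms base 2. $\mathbf{Y}=\{Y^n\}$ is a general source on an arbitrary alphabet $\mathcal{Y}^n$; the reproduction alphabet is $\mathcal{X}^n$ with $\mathcal{X}$ finite; $d_n:\mathcal{X}^n\times\mathcal{Y}^n\to[0,\infty)$ is a distortion function and $D\ge0$. A conditional distribution $\mu_{X^n|Y^n}$ is given for each $n$, $(X^n,Y^n)$ has joint law $\mu_{X^n|Y^n}(\mathbf{x}|\mathbf{y})\mu_{Y^n}(\mathbf{y})$, and $\mu_{X^n}$ is the resulting marginal. $\overline{H}(\mathbf{X})=\inf\{\theta:\lim_nP(\frac1n\log\frac1{\mu_{X^n}(X^n)}>\theta)=0\}$, $\underline{H}(\mathbf{X}|\mathbf{Y})=\sup\{\theta:\lim_nP(\frac1n\log\frac1{\mu_{X^n|Y^n}(X^n|Y^n)}<\theta)=0\}$. Ensembles and hash property: an ensemble is a sequence $\{(\mathcal{A}_n,p_{\mathsf{A},n})\}$ where $\mathcal{A}_n$ is a set of functions $A:\mathcal{X}^n\to\mathrm{Im}\mathcal{A}_n:=\bigcup_{A\in\mathcal{A}_n}\{A\mathbf{u}:\mathbf{u}\in\mathcal{X}^n\}$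 and $p_{\mathsf{A},n}$ a probability distribution on $\mathcal{A}_n$; it has an $(\boldsymbol\alpha,\boldsymbol\beta)$-hash property if there are sequences $\alpha(n)\to1$, $\beta(n)\to0$ such that for all $n$ and $\mathbf{u}$, $\sum p_{\mathsf{A},n}(\{A:A\mathbf{u}=A\mathbf{u}'\})\le\beta(n)$, summing over $\mathbf{u}'\ne\mathbf{u}$ with $p_{\mathsf{A},n}(\{A:A\mathbf{u}=A\mathbf{u}'\})>\alpha(n)/|\mathrm{Im}\mathcal{A}_n|$. Setting: $\{(\mathcal{A}_n,p_{\mathsf{A},n})\}$, $\{(\mathcal{B}_n,p_{\mathsf{B},n})\}$ are ensembles of functions on $\mathcal{X}^n$, each with some hash property, with $\frac1n\log|\mathrm{Im}\mathcal{A}_n|=r$, $\frac1n\log|\mathrm{Im}\mathcal{B}_n|=R$. $\mathcal{C}_A(\mathbf{c})=\{\mathbf{x}:A\mathbf{x}=\mathbf{c}\}$, $\mathcal{C}_{AB}(\mathbf{c},\mathbf{m})=\{\mathbf{x}:A\mathbf{x}=\mathbf{c},B\mathbf{x}=\mathbf{m}\}$. Stochastic encoder $\Phi_n(\mathbf{y})=B\widetilde{X}$ where $\widetilde{X}$ has distribution $\mu_{X^n|Y^n}(\mathbf{x}|\mathbf{y})/\mu_{X^n|Y^n}(\mathcal{C}_A(\mathbf{c})|\mathbf{y})$ on $\mathcal{C}_A(\mathbf{c})$ (encoding error if $\mu_{X^n|Y^n}(\mathcal{C}_A(\mathbf{c})|\mathbf{y})=0$). Decoder $\psi_n(\mathbf{m})=\arg\max_{\mathbf{x}'\in\mathcal{C}_{AB}(\mathbf{c},\mathbf{m})}\mu_{X^n}(\mathbf{x}')$.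 $\mathrm{Error}(A,B,\mathbf{c},D)=P(d_n(\psi_n(\Phi_n(Y^n)),Y^n)>D)$, with the convention that the distortion is $\infty$ when an encoding error occurs. *)

theory Defs
  imports "HOL-Probability.Probability"
begin

definition seqs :: "nat \<Rightarrow> 'x list set" where
  "seqs n = {xs. length xs = n}"

definition marg :: "'y measure \<Rightarrow> ('x list \<Rightarrow> 'y \<Rightarrow> real) \<Rightarrow> 'x list \<Rightarrow> real" where
  "marg M W x = (\<integral>y. W x y \<partial>M)"

definition joint_prob :: "'y measure \<Rightarrow> nat \<Rightarrow> ('x list \<Rightarrow> 'y \<Rightarrow> real)
    \<Rightarrow> ('x list \<Rightarrow> 'y \<Rightarrow> bool) \<Rightarrow> real" where
  "joint_prob M n W E = (\<integral>y. (\<Sum>x\<in>seqs n. W x y * (if E x y then 1 else 0)) \<partial>M)"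

text \<open>Spectral sup-entropy rate of X (infimum of the empty set is +infinity).\<close>
definition sup_entropy :: "(nat \<Rightarrow> 'y measure) \<Rightarrow> (nat \<Rightarrow> 'x list \<Rightarrow> 'y \<Rightarrow> real) \<Rightarrow> ereal" where
  "sup_entropy PY W = Inf (ereal ` {\<theta>. (\<lambda>n. joint_prob (PY n) n (W n)
       (\<lambda>x y. 1 / real n * log 2 (1 / marg (PY n) (W n) x) > \<theta>)) \<longlonglongrightarrow> 0})"

definition inf_cond_entropy :: "(nat \<Rightarrow> 'y measure) \<Rightarrow> (nat \<Rightarrow> 'x list \<Rightarrow> 'y \<Rightarrow> real) \<Rightarrow> ereal" where
  "inf_cond_entropy PY W = Sup (ereal ` {\<theta>. (\<lambda>n. joint_prob (PY n) n (W n)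
       (\<lambda>x y. 1 / real n * log 2 (1 / W n x y) < \<theta>)) \<longlonglongrightarrow> 0})"

definition img :: "('x list \<Rightarrow> 'a) set \<Rightarrow> nat \<Rightarrow> 'a set" where
  "img F n = (\<Union>A\<in>F. A ` seqs n)"

definition ensemble :: "(nat \<Rightarrow> ('x list \<Rightarrow> 'a) set) \<Rightarrow> (nat \<Rightarrow> ('x list \<Rightarrow> 'a) pmf) \<Rightarrow> bool" where
  "ensemble F p \<longleftrightarrow> (\<forall>n. set_pmf (p n) \<subseteq> F n)"

definition hash_property :: "(nat \<Rightarrow> ('x list \<Rightarrow> 'a) set) \<Rightarrow> (nat \<Rightarrow> ('x list \<Rightarrow> 'a) pmf) \<Rightarrow> bool" where
  "hash_property F p \<longleftrightarrow> (\<exists>\<alpha> \<beta> :: nat \<Rightarrow> real. \<alpha> \<longlonglongrightarrow> 1 \<and> \<beta> \<longlonglongrightarrow> 0 \<and>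
     (\<forall>n. \<forall>u\<in>seqs n.
        (\<Sum>u'\<in>{u'\<in>seqs n. u' \<noteq> u \<and>
              measure_pmf.prob (p n) {A. A u = A u'} > \<alpha> n / real (card (img (F n) n))}.
            measure_pmf.prob (p n) {A. A u = A u'}) \<le> \<beta> n))"

text \<open>Decoder: a maximiser of mu_{X^n} over C_AB(c,m) (ties broken by Hilbert choice).\<close>
definition decoder :: "'y measure \<Rightarrow> nat \<Rightarrow> ('x list \<Rightarrow> 'y \<Rightarrow> real)
    \<Rightarrow> ('x list \<Rightarrow> 'a) \<Rightarrow> ('x list \<Rightarrow> 'b) \<Rightarrow> 'a \<Rightarrow> 'b \<Rightarrow> 'x list" where
  "decoder M n W A B c m = arg_max (marg M W) (\<lambda>x. x \<in> seqs n \<and> A x = c \<and> B x = m)"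

text \<open>Error(A,B,c,D): averaged over Y^n and the stochastic encoder; an encoding
  error (W(C_A(c)|y) = 0) counts as distortion exceeding D.\<close>
definition code_error :: "'y measure \<Rightarrow> nat \<Rightarrow> ('x list \<Rightarrow> 'y \<Rightarrow> real)
    \<Rightarrow> ('x list \<Rightarrow> 'y \<Rightarrow> real) \<Rightarrow> ('x list \<Rightarrow> 'a) \<Rightarrow> ('x list \<Rightarrow> 'b) \<Rightarrow> 'a \<Rightarrow> real \<Rightarrow> real" where
  "code_error M n W d A B c D =
     (\<integral>y. (let Z = (\<Sum>x\<in>{x\<in>seqs n. A x = c}. W x y) in
           if Z = 0 then 1
           else (\<Sum>x\<in>{x\<in>seqs n. A x = c}. W x y / Z *
                   (if d (decoder M n W A B c (B x)) y > D then 1 else 0))) \<partial>M)"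

end

theory Submission
  imports Defs
begin

text \<open>
  The code is analysed by averaging twice. For fixed \<open>A\<close> and \<open>B\<close>, averaging over the coset
  index \<open>c\<close> compares the stochastic encoder with the test channel: the error exceeds
  \<open>P(d(X\<^sup>n, Y\<^sup>n) > D)\<close> by at most the probability that the decoder misses \<open>X\<^sup>n\<close> plus the
  \<open>L\<^sub>1\<close> distance of the coset weights \<open>\<mu>(C\<^sub>A(c)|y)\<close> from uniform. Averaging over the hash
  ensembles, a miss requires a competitor in the bin of \<open>X\<^sup>n\<close> at least as likely, which is rare
  when \<open>\<mu>(X\<^sup>n) > 2 powr (- n \<theta>\<^sub>2)\<close> for some \<open>\<theta>\<^sub>2\<close> between the sup-entropy rate and \<open>r + R\<close>; and the
  coset weights are balanced by a second-moment (balanced-coloring) argument applied to the part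
  of \<open>\<mu>(\<cdot>|y)\<close> below \<open>2 powr (- n \<theta>\<^sub>1)\<close>, for some \<open>\<theta>\<^sub>1\<close> between \<open>r\<close> and the conditional inf-entropy
  rate. All error terms vanish, so some \<open>(A, B, c)\<close> attains the bound.
\<close>

lemma finite_seqs [simp]: "finite (seqs n :: 'x::finite list set)"
  unfolding seqs_def using finite_lists_length_eq[of "UNIV :: 'x set" n] by simp

lemma seqs_not_empty: "seqs n \<noteq> {}"
  unfolding seqs_def by (auto intro!: exI[of _ "replicate n undefined"])

lemma integrable_measure_pmf_bounded:
  fixes f :: "'a \<Rightarrow> real"
  assumes "\<And>z. z \<in> set_pmf p \<Longrightarrow> \<bar>f z\<bar> \<le> C"
  shows "integrable (measure_pmf p) f"
  by (rule measure_pmf.integrable_const_bound[where B=C]) (auto simp: AE_measure_pmf_iff assms)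

lemma expectation_pmf_indicator:
  "measure_pmf.expectation p (\<lambda>z. if Q z then 1 else 0 :: real) = measure_pmf.prob p {z. Q z}"
proof -
  have "(\<lambda>z. if Q z then 1 else 0::real) = indicator {z. Q z}" by (auto simp: indicator_def)
  then show ?thesis by simp
qed

lemma measure_pmf_exists_le_expectation:
  fixes f :: "'a \<Rightarrow> real"
  assumes "integrable (measure_pmf p) f"
  shows "\<exists>z\<in>set_pmf p. f z \<le> measure_pmf.expectation p f"
proof (rule ccontr)
  assume "\<not> ?thesis"
  then have "AE z in p. measure_pmf.expectation p f < f z"
    by (auto simp: AE_measure_pmf_iff not_le)
  then have "measure_pmf.expectation p (\<lambda>_. measure_pmf.expectation p f) < measure_pmf.expectation p f"
    by (intro measure_pmf.integral_less_AE_space assms) auto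
  then show False by simp
qed

lemma exists_le_average:
  fixes f :: "'c \<Rightarrow> real"
  assumes "finite I" "I \<noteq> {}"
  shows "\<exists>c\<in>I. f c \<le> (\<Sum>c\<in>I. f c) / real (card I)"
proof -
  have "Min (f ` I) \<in> f ` I" using assms by simp
  then obtain c where c: "c \<in> I" "f c = Min (f ` I)" by auto
  have "real (card I) * f c \<le> (\<Sum>c\<in>I. f c)"
    using c assms by (intro sum_bounded_below) auto
  then have "f c \<le> (\<Sum>c\<in>I. f c) / real (card I)"
    using assms by (simp add: field_simps card_gt_0_iff mult.commute)
  then show ?thesis using c(1) by blast
qed

lemma measure_pair_pmf_Times:
  "measure (pair_pmf p q) (X \<times> Y) = measure p X * measure q Y"
proof -
  have "emeasure (pair_pmf p q) (X \<times> Y) = (\<integral>\<^sup>+a. \<integral>\<^sup>+b. indicator X a * indicator Y b \<partial>q \<partial>p)"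
    by (simp add: nn_integral_indicator[symmetric] nn_integral_pair_pmf' indicator_times)
  also have "\<dots> = emeasure p X * emeasure q Y"
    by (simp add: nn_integral_cmult nn_integral_multc nn_integral_indicator)
  finally show ?thesis by (simp add: measure_def enn2real_mult)
qed

lemma pmf_Fubini:
  fixes p :: "'a pmf" and M :: "'y measure" and g :: "'a \<Rightarrow> 'y \<Rightarrow> real"
  assumes M: "prob_space M"
    and meas: "\<And>a. g a \<in> borel_measurable M"
    and bnd: "\<And>a y. a \<in> set_pmf p \<Longrightarrow> y \<in> space M \<Longrightarrow> \<bar>g a y\<bar> \<le> C"
  shows "integrable M (\<lambda>y. measure_pmf.expectation p (\<lambda>a. g a y))"
    and "measure_pmf.expectation p (\<lambda>a. \<integral>y. g a y \<partial>M)
           = (\<integral>y. measure_pmf.expectation p (\<lambda>a. g a y) \<partial>M)"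
proof -
  interpret A: prob_space "restrict_space p p"
    by (intro prob_space_restrict_space measure_pmf.emeasure_eq_1_AE)
       (auto simp: AE_measure_pmf_iff)
  interpret Mp: prob_space M by (rule M)
  interpret AB: pair_prob_space M "restrict_space p p" by unfold_locales
  have restrict: "measure_pmf.expectation p f = (\<integral>a. f a \<partial>restrict_space p p)" for f :: "'a \<Rightarrow> real"
    by (rule integral_pmf_restrict) auto
  have int: "integrable (M \<Otimes>\<^sub>M restrict_space p p) (\<lambda>(y,a). g a y)"
    by (auto intro!: AB.integrable_const_bound[where B=C] measurable_pair_restrict_pmf2 meas
             simp: space_pair_measure space_restrict_space bnd)
  show "integrable M (\<lambda>y. measure_pmf.expectation p (\<lambda>a. g a y))"
    unfolding restrict using AB.integrable_fst'[OF int] by simp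
  show "measure_pmf.expectation p (\<lambda>a. \<integral>y. g a y \<partial>M)
           = (\<integral>y. measure_pmf.expectation p (\<lambda>a. g a y) \<partial>M)"
    unfolding restrict using AB.Fubini_integral[OF int] by simp
qed

subsection \<open>Collision bounds of random functions\<close>

definition collision_bounded :: "('u \<Rightarrow> 'a) pmf \<Rightarrow> 'u set \<Rightarrow> real \<Rightarrow> real \<Rightarrow> bool" where
  "collision_bounded p S q b \<longleftrightarrow> (\<forall>u\<in>S.
     (\<Sum>u'\<in>{u'\<in>S. u' \<noteq> u \<and> measure_pmf.prob p {A. A u = A u'} > q}.
        measure_pmf.prob p {A. A u = A u'}) \<le> b)"

lemma hash_property_iff:
  "hash_property F p \<longleftrightarrow> (\<exists>\<alpha> \<beta> :: nat \<Rightarrow> real. \<alpha> \<longlonglongrightarrow> 1 \<and> \<beta> \<longlonglongrightarrow> 0 \<and>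
     (\<forall>n. collision_bounded (p n) (seqs n) (\<alpha> n / real (card (img (F n) n))) (\<beta> n)))"
  unfolding hash_property_def collision_bounded_def ..

lemma collision_bounded_nonneg:
  assumes "collision_bounded p S q b" and "S \<noteq> {}"
  shows "0 \<le> b"
proof -
  obtain u where u: "u \<in> S" using assms(2) by blast
  have "0 \<le> (\<Sum>u'\<in>{u'\<in>S. u' \<noteq> u \<and> measure_pmf.prob p {A. A u = A u'} > q}.
              measure_pmf.prob p {A. A u = A u'})" by (rule sum_nonneg) simp
  also have "\<dots> \<le> b" using assms(1) u unfolding collision_bounded_def by blast
  finally show ?thesis .
qed

lemma collision_bounded_subset_sum:
  assumes "collision_bounded p S q b" "u \<in> S" "finite S" "U \<subseteq> S - {u}"
  shows "(\<Sum>u'\<in>{u'\<in>U. measure_pmf.prob p {A. A u = A u'} > q}. measure_pmf.prob p {A. A u = A u'}) \<le> b"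
proof -
  have "(\<Sum>u'\<in>{u'\<in>U. measure_pmf.prob p {A. A u = A u'} > q}. measure_pmf.prob p {A. A u = A u'})
      \<le> (\<Sum>u'\<in>{u'\<in>S. u' \<noteq> u \<and> measure_pmf.prob p {A. A u = A u'} > q}. measure_pmf.prob p {A. A u = A u'})"
    using assms(3,4) by (intro sum_mono2) auto
  also have "\<dots> \<le> b" using assms(1,2) unfolding collision_bounded_def by blast
  finally show ?thesis .
qed

lemma mult_le_threshold_split:
  fixes a b qa qb :: real
  assumes "0 \<le> a" "a \<le> 1" "0 \<le> b" "b \<le> 1"
  shows "a * b \<le> (if qa < a then a else 0) + (if qb < b then b else 0) + \<bar>qa * qb\<bar>"
proof -
  have "a * b \<le> a" "a * b \<le> b" using assms by (simp_all add: mult_left_le mult_left_le_one_le)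
  moreover have "a * b \<le> qa * qb" if "a \<le> qa" "b \<le> qb" using that assms by (intro mult_mono) auto
  ultimately show ?thesis using assms by (simp; linarith)
qed

text \<open>The collision probability \<open>pA(x') * pB(x')\<close> of each \<open>x'\<close> is charged to the hash bound
  of \<open>A\<close> or of \<open>B\<close> when one of the factors is large, and otherwise is at most \<open>qA * qB\<close>.\<close>
lemma prob_pair_collision_le:
  fixes pA :: "('u \<Rightarrow> 'a) pmf" and pB :: "('u \<Rightarrow> 'b) pmf"
  assumes S: "finite S" and G: "G \<subseteq> S" and x: "x \<in> S"
    and hA: "collision_bounded pA S qA bA" and hB: "collision_bounded pB S qB bB"
  shows "measure_pmf.prob (pair_pmf pA pB) {(A,B). \<exists>x'\<in>G-{x}. A x' = A x \<and> B x' = B x}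
          \<le> bA + bB + real (card G) * \<bar>qA * qB\<bar>"
proof -
  define pa where "pa x' = measure_pmf.prob pA {A. A x = A x'}" for x'
  define pb where "pb x' = measure_pmf.prob pB {B. B x = B x'}" for x'
  have finG: "finite (G - {x})" using S G finite_subset by blast
  have union: "{(A,B). \<exists>x'\<in>G-{x}. A x' = A x \<and> B x' = B x}
        = (\<Union>x'\<in>G-{x}. {A. A x = A x'} \<times> {B. B x = B x'})" by auto
  have "measure_pmf.prob (pair_pmf pA pB) {(A,B). \<exists>x'\<in>G-{x}. A x' = A x \<and> B x' = B x}
      \<le> (\<Sum>x'\<in>G-{x}. measure_pmf.prob (pair_pmf pA pB) ({A. A x = A x'} \<times> {B. B x = B x'}))"
    unfolding union using finG by (intro measure_UNION_le) auto
  also have "\<dots> = (\<Sum>x'\<in>G-{x}. pa x' * pb x')"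
    by (simp add: measure_pair_pmf_Times pa_def pb_def)
  also have "\<dots> \<le> (\<Sum>x'\<in>G-{x}. (if qA < pa x' then pa x' else 0) + (if qB < pb x' then pb x' else 0)
                       + \<bar>qA * qB\<bar>)"
    by (intro sum_mono mult_le_threshold_split) (auto simp: pa_def pb_def)
  also have "\<dots> = (\<Sum>x'\<in>{x'\<in>G-{x}. qA < pa x'}. pa x') + (\<Sum>x'\<in>{x'\<in>G-{x}. qB < pb x'}. pb x')
                   + real (card (G-{x})) * \<bar>qA * qB\<bar>"
    by (simp only: sum.distrib sum.inter_filter[OF finG] sum_constant)
  also have "\<dots> \<le> bA + bB + real (card G) * \<bar>qA * qB\<bar>"
  proof (intro add_mono mult_right_mono)
    have "G - {x} \<subseteq> S - {x}" using G by auto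
    from collision_bounded_subset_sum[OF hA x S this] collision_bounded_subset_sum[OF hB x S this]
    show "(\<Sum>x'\<in>{x'\<in>G-{x}. qA < pa x'}. pa x') \<le> bA" "(\<Sum>x'\<in>{x'\<in>G-{x}. qB < pb x'}. pb x') \<le> bB"
      by (simp_all add: pa_def pb_def)
    show "real (card (G - {x})) \<le> real (card G)"
      using card_mono[OF finite_subset[OF G S], of "G - {x}"] by auto
  qed simp
  finally show ?thesis .
qed

lemma weighted_collision_row_le:
  fixes p :: "('u \<Rightarrow> 'a) pmf" and w :: "'u \<Rightarrow> real"
  assumes S: "finite S" and TS: "T \<subseteq> S" and w: "\<And>x. x \<in> T \<Longrightarrow> 0 \<le> w x"
    and ws: "\<And>x. x \<in> T \<Longrightarrow> w x \<le> s" and h: "collision_bounded p S q b" and x: "x \<in> T"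
  shows "(\<Sum>x'\<in>T. w x' * measure_pmf.prob p {A. A x = A x'}) \<le> s * (1 + b) + max q 0 * (\<Sum>x\<in>T. w x)"
proof -
  define P where "P x' = measure_pmf.prob p {A. A x = A x'}" for x'
  have finT: "finite T" using S TS finite_subset by blast
  have P: "0 \<le> P x'" "P x' \<le> 1" for x' by (auto simp: P_def)
  have "(\<Sum>x'\<in>T. w x' * P x') = w x * P x + (\<Sum>x'\<in>T - {x}. w x' * P x')"
    using x finT by (simp add: sum.remove)
  also have "\<dots> \<le> s + (\<Sum>x'\<in>T - {x}. s * (if q < P x' then P x' else 0) + max q 0 * w x')"
  proof (intro add_mono sum_mono)
    show "w x * P x \<le> s" using w[OF x] ws[OF x] P[of x] by (meson mult_right_le_one_le order_trans)
    fix x' assume "x' \<in> T - {x}"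
    then have "0 \<le> w x'" "w x' \<le> s" using w ws by auto
    show "w x' * P x' \<le> s * (if q < P x' then P x' else 0) + max q 0 * w x'"
    proof (cases "q < P x'")
      case True
      have "w x' * P x' \<le> s * P x'" using \<open>w x' \<le> s\<close> P by (intro mult_right_mono) auto
      with True \<open>0 \<le> w x'\<close> show ?thesis by (simp add: add_increasing2)
    next
      case False
      then have "w x' * P x' \<le> w x' * max q 0" using \<open>0 \<le> w x'\<close> by (intro mult_left_mono) auto
      with False show ?thesis by (simp add: mult.commute)
    qed
  qed
  also have "\<dots> = s + s * (\<Sum>x'\<in>{x'\<in>T - {x}. q < P x'}. P x') + max q 0 * (\<Sum>x'\<in>T - {x}. w x')"
    using finT by (simp only: sum.distrib sum.inter_filter[OF finite_Diff] sum_distrib_left)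
  also have "\<dots> \<le> s + s * b + max q 0 * (\<Sum>x\<in>T. w x)"
  proof (intro add_mono mult_left_mono order_refl)
    have "T - {x} \<subseteq> S - {x}" using TS by auto
    from collision_bounded_subset_sum[OF h _ S this] x TS
    show "(\<Sum>x'\<in>{x'\<in>T - {x}. q < P x'}. P x') \<le> b" by (auto simp: P_def)
    show "(\<Sum>x'\<in>T - {x}. w x') \<le> (\<Sum>x\<in>T. w x)" using finT w by (intro sum_mono2) auto
    show "0 \<le> s" using w[OF x] ws[OF x] by simp
  qed simp
  finally show ?thesis by (simp add: P_def algebra_simps)
qed

lemma weighted_collision_sum_le:
  fixes p :: "('u \<Rightarrow> 'a) pmf" and w :: "'u \<Rightarrow> real"
  assumes S: "finite S" and TS: "T \<subseteq> S" and w: "\<And>x. x \<in> T \<Longrightarrow> 0 \<le> w x"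
    and ws: "\<And>x. x \<in> T \<Longrightarrow> w x \<le> s" and h: "collision_bounded p S q b"
  shows "(\<Sum>x\<in>T. \<Sum>x'\<in>T. w x * w x' * measure_pmf.prob p {A. A x = A x'})
       \<le> (\<Sum>x\<in>T. w x) * (s * (1 + b) + max q 0 * (\<Sum>x\<in>T. w x))"
proof -
  have "(\<Sum>x\<in>T. w x * (\<Sum>x'\<in>T. w x' * measure_pmf.prob p {A. A x = A x'}))
      \<le> (\<Sum>x\<in>T. w x * (s * (1 + b) + max q 0 * (\<Sum>x\<in>T. w x)))"
    by (intro sum_mono mult_left_mono w weighted_collision_row_le[OF S TS w ws h])
  then show ?thesis by (simp add: sum_distrib_left sum_distrib_right mult.assoc)
qed

subsection \<open>Coset weights\<close>

lemma ratio_div_le_add_abs_diff: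
  fixes Z s m :: real
  assumes "0 \<le> s" "s \<le> Z" "0 < m"
  shows "(if Z = 0 then 1 else s / Z) / m \<le> s + \<bar>Z - 1/m\<bar>"
proof (cases "Z = 0")
  case False
  then have Z: "0 < Z" using assms by simp
  have "s / Z / m - s = (s / Z) * (1 / m - Z)" using Z assms by (simp add: field_simps)
  also have "\<dots> \<le> (s / Z) * \<bar>Z - 1/m\<bar>" using assms Z by (intro mult_left_mono) auto
  also have "\<dots> \<le> \<bar>Z - 1/m\<bar>" using assms Z by (intro mult_left_le_one_le) auto
  finally show ?thesis using False by simp
qed (use assms in simp)

lemma normalized_average_bounds:
  fixes S :: "'x set" and w H :: "'x \<Rightarrow> real"
  assumes "finite S" "\<And>x. x \<in> S \<Longrightarrow> 0 \<le> w x" "\<And>x. 0 \<le> H x" "\<And>x. H x \<le> 1"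
  shows "0 \<le> (let Z = (\<Sum>x\<in>S. w x) in if Z = 0 then 1 else (\<Sum>x\<in>S. w x / Z * H x))
       \<and> (let Z = (\<Sum>x\<in>S. w x) in if Z = 0 then 1 else (\<Sum>x\<in>S. w x / Z * H x)) \<le> 1"
proof -
  define Z where "Z = (\<Sum>x\<in>S. w x)"
  have "0 \<le> Z" unfolding Z_def using assms by (auto intro!: sum_nonneg)
  moreover have "(\<Sum>x\<in>S. w x / Z * H x) = (\<Sum>x\<in>S. w x * H x) / Z"
    by (simp add: sum_divide_distrib)
  moreover have "0 \<le> (\<Sum>x\<in>S. w x * H x)" using assms by (auto intro!: sum_nonneg)
  moreover have "(\<Sum>x\<in>S. w x * H x) \<le> Z" unfolding Z_def using assms
    by (intro sum_mono) (auto intro: mult_left_le)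
  ultimately show ?thesis unfolding Z_def[symmetric] Let_def
    by (auto simp: divide_le_eq_1)
qed

text \<open>Normalizing by the coset weight costs at most the distance of the coset weights from
  the uniform weight \<open>1 / |I|\<close>.\<close>
lemma average_over_cosets_le:
  fixes S :: "'x set" and I :: "'c set" and A :: "'x \<Rightarrow> 'c" and w :: "'x \<Rightarrow> real"
    and H :: "'c \<Rightarrow> 'x \<Rightarrow> real"
  assumes fin: "finite S" "finite I" and ne: "I \<noteq> {}" and AS: "A ` S \<subseteq> I"
    and w: "\<And>x. x \<in> S \<Longrightarrow> 0 \<le> w x" and H: "\<And>c x. 0 \<le> H c x" "\<And>c x. H c x \<le> 1"
  shows "(\<Sum>c\<in>I. (let Z = (\<Sum>x\<in>{x\<in>S. A x = c}. w x) in if Z = 0 then 1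
            else (\<Sum>x\<in>{x\<in>S. A x = c}. w x / Z * H c x))) / real (card I)
        \<le> (\<Sum>x\<in>S. w x * H (A x) x) + (\<Sum>c\<in>I. \<bar>(\<Sum>x\<in>{x\<in>S. A x = c}. w x) - 1 / real (card I)\<bar>)"
proof -
  define m where "m = real (card I)"
  have m: "0 < m" using fin ne by (simp add: m_def card_gt_0_iff)
  define s where "s c = (\<Sum>x\<in>{x\<in>S. A x = c}. w x * H c x)" for c
  define Z where "Z c = (\<Sum>x\<in>{x\<in>S. A x = c}. w x)" for c
  have "(let Z = (\<Sum>x\<in>{x\<in>S. A x = c}. w x) in if Z = 0 then 1
            else (\<Sum>x\<in>{x\<in>S. A x = c}. w x / Z * H c x)) / m \<le> s c + \<bar>Z c - 1/m\<bar>" for c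
  proof -
    have "0 \<le> s c" unfolding s_def using w H by (auto intro!: sum_nonneg)
    moreover have "s c \<le> Z c" unfolding s_def Z_def using w H
      by (intro sum_mono) (auto intro: mult_left_le)
    moreover have "(let Z = (\<Sum>x\<in>{x\<in>S. A x = c}. w x) in if Z = 0 then 1
            else (\<Sum>x\<in>{x\<in>S. A x = c}. w x / Z * H c x)) = (if Z c = 0 then 1 else s c / Z c)"
      unfolding Let_def s_def Z_def by (simp add: sum_divide_distrib)
    ultimately show ?thesis using ratio_div_le_add_abs_diff[of "s c" "Z c" m] m by simp
  qed
  then have "(\<Sum>c\<in>I. (let Z = (\<Sum>x\<in>{x\<in>S. A x = c}. w x) in if Z = 0 then 1
            else (\<Sum>x\<in>{x\<in>S. A x = c}. w x / Z * H c x))) / m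
      \<le> (\<Sum>c\<in>I. s c) + (\<Sum>c\<in>I. \<bar>Z c - 1/m\<bar>)"
    by (simp add: sum_divide_distrib sum.distrib[symmetric] sum_mono)
  also have "(\<Sum>c\<in>I. s c) = (\<Sum>x\<in>S. w x * H (A x) x)"
  proof -
    have "(\<Sum>c\<in>I. s c) = (\<Sum>c\<in>I. \<Sum>x\<in>{x\<in>S. A x = c}. w x * H (A x) x)"
      unfolding s_def by (intro sum.cong refl) auto
    also have "\<dots> = (\<Sum>x\<in>S. w x * H (A x) x)" by (rule sum.group[OF fin AS])
    finally show ?thesis .
  qed
  finally show ?thesis unfolding m_def Z_def .
qed

lemma sum_abs_coset_dev_split:
  fixes S T :: "'u set" and I :: "'c set" and w :: "'u \<Rightarrow> real"
  assumes fin: "finite S" "finite I" and AS: "A ` S \<subseteq> I" and I: "card I > 0"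
    and TS: "T \<subseteq> S" and w: "\<And>x. x \<in> S \<Longrightarrow> 0 \<le> w x" and ws: "(\<Sum>x\<in>S. w x) = 1"
  shows "(\<Sum>c\<in>I. \<bar>(\<Sum>x\<in>{x\<in>S. A x = c}. w x) - 1 / real (card I)\<bar>)
     \<le> (\<Sum>c\<in>I. \<bar>(\<Sum>x\<in>{x\<in>T. A x = c}. w x) - (\<Sum>x\<in>T. w x) / real (card I)\<bar>)
        + 2 * (1 - (\<Sum>x\<in>T. w x))"
proof -
  define m where "m = real (card I)"
  define \<tau> where "\<tau> = (\<Sum>x\<in>T. w x)"
  have m: "0 < m" using I by (simp add: m_def)
  have finT: "finite T" using TS fin finite_subset by blast
  have rest: "(\<Sum>x\<in>S - T. w x) = 1 - \<tau>"
    using sum_diff[OF fin(1) TS, of w] ws unfolding \<tau>_def by simp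
  moreover have "0 \<le> (\<Sum>x\<in>S - T. w x)" using w by (auto intro: sum_nonneg)
  ultimately have "\<tau> \<le> 1" by simp
  define Z1 where "Z1 c = (\<Sum>x\<in>{x\<in>T. A x = c}. w x)" for c
  define Z2 where "Z2 c = (\<Sum>x\<in>{x\<in>S - T. A x = c}. w x)" for c
  have "(\<Sum>x\<in>{x\<in>S. A x = c}. w x) = Z1 c + Z2 c" for c
  proof -
    have "{x\<in>S. A x = c} = {x\<in>T. A x = c} \<union> {x\<in>S - T. A x = c}" using TS by auto
    then show ?thesis unfolding Z1_def Z2_def using fin finT
      by (simp add: sum.union_disjoint[symmetric] Int_def)
  qed
  then have "(\<Sum>c\<in>I. \<bar>(\<Sum>x\<in>{x\<in>S. A x = c}. w x) - 1 / m\<bar>)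
      \<le> (\<Sum>c\<in>I. \<bar>Z1 c - \<tau> / m\<bar> + Z2 c + (1 - \<tau>) / m)"
  proof (intro sum_mono)
    fix c
    assume "\<And>c. (\<Sum>x\<in>{x\<in>S. A x = c}. w x) = Z1 c + Z2 c"
    then have "(\<Sum>x\<in>{x\<in>S. A x = c}. w x) - 1 / m = (Z1 c - \<tau> / m) + Z2 c - (1 - \<tau>) / m"
      using m by (simp add: field_simps)
    moreover have "0 \<le> Z2 c" unfolding Z2_def using w by (auto intro!: sum_nonneg)
    moreover have "0 \<le> (1 - \<tau>) / m" using \<open>\<tau> \<le> 1\<close> m by simp
    ultimately show "\<bar>(\<Sum>x\<in>{x\<in>S. A x = c}. w x) - 1 / m\<bar> \<le> \<bar>Z1 c - \<tau> / m\<bar> + Z2 c + (1 - \<tau>) / m"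
      by linarith
  qed
  also have "\<dots> = (\<Sum>c\<in>I. \<bar>Z1 c - \<tau> / m\<bar>) + (\<Sum>c\<in>I. Z2 c) + (1 - \<tau>)"
    using m by (simp add: sum.distrib m_def)
  also have "(\<Sum>c\<in>I. Z2 c) = 1 - \<tau>"
    unfolding Z2_def using sum.group[of "S - T" I A w] fin AS rest by auto
  finally show ?thesis unfolding m_def Z1_def \<tau>_def by simp
qed

lemma sum_abs_le_sum_squares:
  fixes I :: "'c set" and a :: "'c \<Rightarrow> real"
  assumes I: "card I > 0" and \<eta>: "0 < \<eta>"
  shows "(\<Sum>c\<in>I. \<bar>a c\<bar>) \<le> real (card I) / (2 * \<eta>) * (\<Sum>c\<in>I. (a c)^2) + \<eta> / 2"
proof -
  define m where "m = real (card I)"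
  have m: "0 < m" using I by (simp add: m_def)
  have "\<bar>a c\<bar> \<le> m / (2 * \<eta>) * (a c)^2 + \<eta> / (2 * m)" for c
  proof -
    have "0 \<le> (m * \<bar>a c\<bar> - \<eta>)^2" by simp
    then have "2 * m * \<eta> * \<bar>a c\<bar> \<le> m^2 * (a c)^2 + \<eta>^2"
      by (simp add: power2_eq_square algebra_simps)
    then show ?thesis using m \<eta> by (simp add: field_simps power2_eq_square)
  qed
  then have "(\<Sum>c\<in>I. \<bar>a c\<bar>) \<le> (\<Sum>c\<in>I. m / (2 * \<eta>) * (a c)^2 + \<eta> / (2 * m))"
    by (intro sum_mono)
  also have "\<dots> = m / (2 * \<eta>) * (\<Sum>c\<in>I. (a c)^2) + \<eta> / 2"
    using m by (simp add: sum.distrib sum_distrib_left m_def)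
  finally show ?thesis unfolding m_def .
qed

lemma sum_square_dev_mean:
  fixes I :: "'c set" and Z :: "'c \<Rightarrow> real"
  assumes "card I > 0"
  shows "(\<Sum>c\<in>I. (Z c - (\<Sum>c\<in>I. Z c) / real (card I))^2)
           = (\<Sum>c\<in>I. (Z c)^2) - (\<Sum>c\<in>I. Z c)^2 / real (card I)"
proof -
  define m where "m = real (card I)"
  define \<tau> where "\<tau> = (\<Sum>c\<in>I. Z c)"
  have "(\<Sum>c\<in>I. (Z c - \<tau> / m)^2) = (\<Sum>c\<in>I. (Z c)^2 - 2 * (\<tau> / m) * Z c + (\<tau> / m)^2)"
    by (simp add: power2_eq_square algebra_simps)
  also have "\<dots> = (\<Sum>c\<in>I. (Z c)^2) - 2 * (\<tau> / m) * \<tau> + m * (\<tau> / m)^2"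
    by (simp add: sum.distrib sum_subtractf sum_distrib_left m_def \<tau>_def)
  also have "\<dots> = (\<Sum>c\<in>I. (Z c)^2) - \<tau>^2 / m"
    using assms by (simp add: m_def power2_eq_square field_simps)
  finally show ?thesis unfolding m_def \<tau>_def .
qed

lemma sum_square_coset_weight:
  fixes T :: "'u set" and I :: "'c set" and w :: "'u \<Rightarrow> real"
  assumes fin: "finite T" "finite I" and AT: "A ` T \<subseteq> I"
  shows "(\<Sum>c\<in>I. (\<Sum>x\<in>{x\<in>T. A x = c}. w x)^2)
       = (\<Sum>x\<in>T. \<Sum>x'\<in>T. w x * w x' * (if A x = A x' then 1 else 0))"
proof -
  have "(\<Sum>x\<in>{x\<in>T. A x = c}. w x)^2
      = (\<Sum>x\<in>{x\<in>T. A x = c}. w x * (\<Sum>x'\<in>T. w x' * (if A x = A x' then 1 else 0)))" for c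
  proof -
    have "(\<Sum>x\<in>{x\<in>T. A x = c}. w x)^2 = (\<Sum>x\<in>{x\<in>T. A x = c}. w x * (\<Sum>x'\<in>{x'\<in>T. A x' = c}. w x'))"
      by (simp add: power2_eq_square sum_distrib_right)
    also have "\<dots> = (\<Sum>x\<in>{x\<in>T. A x = c}. w x * (\<Sum>x'\<in>T. w x' * (if A x = A x' then 1 else 0)))"
    proof (intro sum.cong refl)
      fix x assume "x \<in> {x\<in>T. A x = c}"
      then show "w x * (\<Sum>x'\<in>{x'\<in>T. A x' = c}. w x') = w x * (\<Sum>x'\<in>T. w x' * (if A x = A x' then 1 else 0))"
        using fin(1) by (auto simp: sum.inter_filter intro!: sum.cong)
    qed
    finally show ?thesis .
  qed
  then have "(\<Sum>c\<in>I. (\<Sum>x\<in>{x\<in>T. A x = c}. w x)^2)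
      = (\<Sum>c\<in>I. \<Sum>x\<in>{x\<in>T. A x = c}. w x * (\<Sum>x'\<in>T. w x' * (if A x = A x' then 1 else 0)))"
    by simp
  also have "\<dots> = (\<Sum>x\<in>T. w x * (\<Sum>x'\<in>T. w x' * (if A x = A x' then 1 else 0)))"
    by (rule sum.group[OF fin AT])
  finally show ?thesis by (simp add: sum_distrib_left mult.assoc)
qed

text \<open>The core of the balanced-coloring argument: the \<open>L\<^sub>1\<close> distance of the coset weights from
  uniform is bounded, via AM-GM, by their second moment, i.e.\ by collisions of \<open>A\<close> on the
  light part \<open>T\<close> of the weights, plus the mass outside \<open>T\<close>.\<close>
lemma sum_abs_coset_dev_le:
  fixes S T :: "'u set" and I :: "'c set" and w :: "'u \<Rightarrow> real"
  assumes fin: "finite S" "finite I" and AS: "A ` S \<subseteq> I" and I: "card I > 0"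
    and TS: "T \<subseteq> S" and w: "\<And>x. x \<in> S \<Longrightarrow> 0 \<le> w x" and ws: "(\<Sum>x\<in>S. w x) = 1"
    and \<eta>: "0 < \<eta>"
  shows "(\<Sum>c\<in>I. \<bar>(\<Sum>x\<in>{x\<in>S. A x = c}. w x) - 1 / real (card I)\<bar>)
     \<le> real (card I) / (2 * \<eta>) * ((\<Sum>x\<in>T. \<Sum>x'\<in>T. w x * w x' * (if A x = A x' then 1 else 0))
           - (\<Sum>x\<in>T. w x)^2 / real (card I)) + \<eta> / 2 + 2 * (1 - (\<Sum>x\<in>T. w x))"
proof -
  have finT: "finite T" using TS fin finite_subset by blast
  have AT: "A ` T \<subseteq> I" using AS TS by auto
  define Z where "Z c = (\<Sum>x\<in>{x\<in>T. A x = c}. w x)" for c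
  have sumZ: "(\<Sum>c\<in>I. Z c) = (\<Sum>x\<in>T. w x)"
    unfolding Z_def by (rule sum.group[OF finT fin(2) AT])
  have "(\<Sum>c\<in>I. \<bar>(\<Sum>x\<in>{x\<in>S. A x = c}. w x) - 1 / real (card I)\<bar>)
     \<le> (\<Sum>c\<in>I. \<bar>Z c - (\<Sum>x\<in>T. w x) / real (card I)\<bar>) + 2 * (1 - (\<Sum>x\<in>T. w x))"
    using sum_abs_coset_dev_split[OF fin AS I TS w ws] unfolding Z_def .
  also have "(\<Sum>c\<in>I. \<bar>Z c - (\<Sum>x\<in>T. w x) / real (card I)\<bar>)
      \<le> real (card I) / (2 * \<eta>) * (\<Sum>c\<in>I. (Z c - (\<Sum>x\<in>T. w x) / real (card I))^2) + \<eta> / 2"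
    by (rule sum_abs_le_sum_squares[OF I \<eta>])
  also have "(\<Sum>c\<in>I. (Z c - (\<Sum>x\<in>T. w x) / real (card I))^2)
      = (\<Sum>x\<in>T. \<Sum>x'\<in>T. w x * w x' * (if A x = A x' then 1 else 0)) - (\<Sum>x\<in>T. w x)^2 / real (card I)"
    using sum_square_dev_mean[OF I, of Z, unfolded sumZ]
    unfolding Z_def sum_square_coset_weight[OF finT fin(2) AT] .
  finally show ?thesis by simp
qed

lemma sum_abs_coset_dev_le_2:
  fixes S :: "'u set" and I :: "'c set" and w :: "'u \<Rightarrow> real"
  assumes fin: "finite S" "finite I" and AS: "A ` S \<subseteq> I"
    and w: "\<And>x. x \<in> S \<Longrightarrow> 0 \<le> w x" and ws: "(\<Sum>x\<in>S. w x) = 1"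
  shows "(\<Sum>c\<in>I. \<bar>(\<Sum>x\<in>{x\<in>S. A x = c}. w x) - 1 / real (card I)\<bar>) \<le> 2"
proof -
  have "(\<Sum>c\<in>I. \<bar>(\<Sum>x\<in>{x\<in>S. A x = c}. w x) - 1 / real (card I)\<bar>)
      \<le> (\<Sum>c\<in>I. (\<Sum>x\<in>{x\<in>S. A x = c}. w x) + 1 / real (card I))"
    using w by (intro sum_mono) (auto simp: abs_le_iff intro!: sum_nonneg)
  also have "\<dots> = (\<Sum>x\<in>S. w x) + real (card I) * (1 / real (card I))"
    by (simp add: sum.distrib sum.group[OF fin AS])
  also have "\<dots> \<le> 2" using ws by simp
  finally show ?thesis .
qed

lemma expectation_weighted_collisions:
  fixes p :: "('u \<Rightarrow> 'c) pmf" and w :: "'u \<Rightarrow> real"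
  shows "measure_pmf.expectation p (\<lambda>A. \<Sum>x\<in>T. \<Sum>x'\<in>T. w x * w x' * (if A x = A x' then 1 else 0))
       = (\<Sum>x\<in>T. \<Sum>x'\<in>T. w x * w x' * measure_pmf.prob p {A. A x = A x'})"
proof -
  have int: "integrable p (\<lambda>A. w x * w x' * (if A x = A x' then 1 else 0))" for x x'
    by (rule integrable_measure_pmf_bounded[where C="\<bar>w x * w x'\<bar>"]) auto
  then show ?thesis
    by (simp add: Bochner_Integration.integral_sum Bochner_Integration.integrable_sum
                  expectation_pmf_indicator)
qed

lemma second_moment_excess_le:
  fixes E \<tau> m s b q :: real
  assumes "E \<le> \<tau> * (s * (1 + b) + max q 0 * \<tau>)" "0 \<le> \<tau>" "\<tau> \<le> 1" "0 < m" "0 \<le> s" "0 \<le> b"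
  shows "m * (E - \<tau>^2 / m) \<le> m * s * (1 + b) + \<bar>m * max q 0 - 1\<bar>"
proof -
  have "m * E \<le> m * (\<tau> * (s * (1 + b) + max q 0 * \<tau>))"
    using assms by (intro mult_left_mono) auto
  then have "m * (E - \<tau>^2 / m) \<le> m * (\<tau> * (s * (1 + b))) + (m * max q 0 - 1) * \<tau>^2"
    using assms by (simp add: algebra_simps power2_eq_square)
  moreover have "\<tau> * (s * (1 + b)) \<le> s * (1 + b)" using assms by (simp add: mult_left_le_one_le)
  then have "m * (\<tau> * (s * (1 + b))) \<le> m * s * (1 + b)"
    using mult_left_mono[of _ _ m] assms by (simp add: mult.assoc)
  moreover have "(m * max q 0 - 1) * \<tau>^2 \<le> \<bar>m * max q 0 - 1\<bar> * \<tau>^2"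
    by (intro mult_right_mono) auto
  moreover have "\<bar>m * max q 0 - 1\<bar> * \<tau>^2 \<le> \<bar>m * max q 0 - 1\<bar>"
    using assms by (intro mult_left_le) (auto simp: power_le_one)
  ultimately show ?thesis by linarith
qed

lemma expectation_sum_abs_coset_dev_le:
  fixes p :: "('u \<Rightarrow> 'c) pmf" and S T :: "'u set" and I :: "'c set" and w :: "'u \<Rightarrow> real"
  assumes fin: "finite S" "finite I" and I: "card I > 0" and AS: "\<And>A. A \<in> set_pmf p \<Longrightarrow> A ` S \<subseteq> I"
    and TS: "T \<subseteq> S" and w: "\<And>x. x \<in> S \<Longrightarrow> 0 \<le> w x" and ws: "(\<Sum>x\<in>S. w x) = 1"
    and \<eta>: "0 < \<eta>"
  shows "measure_pmf.expectation p (\<lambda>A. \<Sum>c\<in>I. \<bar>(\<Sum>x\<in>{x\<in>S. A x = c}. w x) - 1 / real (card I)\<bar>)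
     \<le> real (card I) / (2 * \<eta>) * (measure_pmf.expectation p
           (\<lambda>A. \<Sum>x\<in>T. \<Sum>x'\<in>T. w x * w x' * (if A x = A x' then 1 else 0))
           - (\<Sum>x\<in>T. w x)^2 / real (card I)) + \<eta> / 2 + 2 * (1 - (\<Sum>x\<in>T. w x))"
proof -
  define F where "F A = (\<Sum>x\<in>T. \<Sum>x'\<in>T. w x * w x' * (if A x = A x' then 1 else 0))"
    for A :: "'u \<Rightarrow> 'c"
  define rhs where "rhs A = real (card I) / (2 * \<eta>) * (F A - (\<Sum>x\<in>T. w x)^2 / real (card I))
      + \<eta> / 2 + 2 * (1 - (\<Sum>x\<in>T. w x))" for A
  have Fint: "integrable p F"
    unfolding F_def
    by (intro Bochner_Integration.integrable_sum Bochner_Integration.integrable_mult_right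
              integrable_measure_pmf_bounded[where C=1]) auto
  have "measure_pmf.expectation p (\<lambda>A. \<Sum>c\<in>I. \<bar>(\<Sum>x\<in>{x\<in>S. A x = c}. w x) - 1 / real (card I)\<bar>)
      \<le> measure_pmf.expectation p rhs"
  proof (rule integral_mono_AE)
    show "integrable p (\<lambda>A. \<Sum>c\<in>I. \<bar>(\<Sum>x\<in>{x\<in>S. A x = c}. w x) - 1 / real (card I)\<bar>)"
    proof (rule integrable_measure_pmf_bounded[where C=2])
      fix A assume "A \<in> set_pmf p"
      from sum_abs_coset_dev_le_2[OF fin AS[OF this] w ws]
      show "\<bar>\<Sum>c\<in>I. \<bar>(\<Sum>x\<in>{x\<in>S. A x = c}. w x) - 1 / real (card I)\<bar>\<bar> \<le> 2"
        by (simp add: abs_of_nonneg sum_nonneg)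
    qed
    show "integrable p rhs" unfolding rhs_def using Fint by simp
    show "AE A in p. (\<Sum>c\<in>I. \<bar>(\<Sum>x\<in>{x\<in>S. A x = c}. w x) - 1 / real (card I)\<bar>) \<le> rhs A"
      unfolding rhs_def F_def AE_measure_pmf_iff
      using sum_abs_coset_dev_le[OF fin AS I TS w ws \<eta>] by blast
  qed
  also have "measure_pmf.expectation p rhs = real (card I) / (2 * \<eta>) * (measure_pmf.expectation p F
      - (\<Sum>x\<in>T. w x)^2 / real (card I)) + \<eta> / 2 + 2 * (1 - (\<Sum>x\<in>T. w x))"
    unfolding rhs_def using Fint by simp
  finally show ?thesis unfolding F_def .
qed

lemma expected_sum_abs_coset_dev_le:
  fixes p :: "('u \<Rightarrow> 'c) pmf" and S :: "'u set" and I :: "'c set" and w :: "'u \<Rightarrow> real"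
  assumes fin: "finite S" "finite I" and I: "card I > 0" and AS: "\<And>A. A \<in> set_pmf p \<Longrightarrow> A ` S \<subseteq> I"
    and w: "\<And>x. x \<in> S \<Longrightarrow> 0 \<le> w x" and ws: "(\<Sum>x\<in>S. w x) = 1"
    and h: "collision_bounded p S q b" and \<eta>: "0 < \<eta>" and s: "0 \<le> s"
  shows "measure_pmf.expectation p (\<lambda>A. \<Sum>c\<in>I. \<bar>(\<Sum>x\<in>{x\<in>S. A x = c}. w x) - 1 / real (card I)\<bar>)
     \<le> (real (card I) * s * (1 + b) + \<bar>real (card I) * max q 0 - 1\<bar>) / (2 * \<eta>) + \<eta> / 2
        + 2 * (\<Sum>x\<in>S. w x * (if w x > s then 1 else 0))"
proof -
  define m where "m = real (card I)"
  define T where "T = {x\<in>S. w x \<le> s}"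
  define \<tau> where "\<tau> = (\<Sum>x\<in>T. w x)"
  have TS: "T \<subseteq> S" unfolding T_def by auto
  have "S \<noteq> {}" using ws by auto
  then have b: "0 \<le> b" by (rule collision_bounded_nonneg[OF h])
  have "S - T = {x\<in>S. s < w x}" by (auto simp: T_def)
  then have "(\<Sum>x\<in>S. w x * (if w x > s then 1 else 0)) = (\<Sum>x\<in>S - T. w x)"
    by (simp add: sum.inter_filter[OF fin(1)] if_distrib cong: if_cong)
  then have heavy: "(\<Sum>x\<in>S. w x * (if w x > s then 1 else 0)) = 1 - \<tau>"
    using sum_diff[OF fin(1) TS, of w] ws unfolding \<tau>_def by simp
  have "0 \<le> (\<Sum>x\<in>S. w x * (if w x > s then 1 else 0))" using w by (auto intro: sum_nonneg)
  then have \<tau>: "0 \<le> \<tau>" "\<tau> \<le> 1"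
    using heavy w TS unfolding \<tau>_def by (auto intro!: sum_nonneg)
  have "measure_pmf.expectation p (\<lambda>A. \<Sum>x\<in>T. \<Sum>x'\<in>T. w x * w x' * (if A x = A x' then 1 else 0))
      \<le> \<tau> * (s * (1 + b) + max q 0 * \<tau>)"
    unfolding expectation_weighted_collisions \<tau>_def
    using weighted_collision_sum_le[OF fin(1) TS _ _ h] w TS by (auto simp: T_def)
  then have "m * (measure_pmf.expectation p (\<lambda>A. \<Sum>x\<in>T. \<Sum>x'\<in>T. w x * w x' * (if A x = A x' then 1 else 0))
      - \<tau>^2 / m) \<le> m * s * (1 + b) + \<bar>m * max q 0 - 1\<bar>"
    by (rule second_moment_excess_le) (use \<tau> I s b in \<open>auto simp: m_def\<close>)
  then show ?thesis
    using expectation_sum_abs_coset_dev_le[OF fin I AS TS w ws \<eta>] heavy \<eta>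
    unfolding m_def \<tau>_def by (smt (verit) divide_right_mono mult.commute times_divide_eq_left)
qed

subsection \<open>Exponential thresholds\<close>

lemma log_inverse_gt_of_le_powr:
  assumes "0 < n" "0 < a" "a \<le> 2 powr (- (real n * \<theta>'))" "\<theta> < \<theta>'"
  shows "\<theta> < 1 / real n * log 2 (1 / a)"
proof -
  have "log 2 a \<le> - (real n * \<theta>')" using assms log_le_cancel_iff[of 2 a "2 powr (- (real n * \<theta>'))"] by simp
  moreover have "real n * \<theta> < real n * \<theta>'" using assms by simp
  moreover have "log 2 (1 / a) = - log 2 a" using assms by (simp add: log_divide)
  ultimately have "real n * \<theta> < log 2 (1 / a)" by linarith
  then show ?thesis using assms by (simp add: field_simps)
qed

lemma log_inverse_less_of_powr_less:
  assumes "0 < n" "2 powr (- (real n * \<theta>')) < a" "\<theta>' < \<theta>"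
  shows "1 / real n * log 2 (1 / a) < \<theta>"
proof -
  have "0 < a" using assms powr_gt_zero[of 2 "- (real n * \<theta>')"] by linarith
  then have "- (real n * \<theta>') < log 2 a" using assms log_less_cancel_iff[of 2 "2 powr (- (real n * \<theta>'))" a] by simp
  moreover have "real n * \<theta>' < real n * \<theta>" using assms by simp
  moreover have "log 2 (1 / a) = - log 2 a" using \<open>0 < a\<close> by (simp add: log_divide)
  ultimately have "log 2 (1 / a) < real n * \<theta>" by linarith
  then show ?thesis using assms by (simp add: field_simps)
qed

lemma card_eq_powr_rate:
  assumes "1 / real n * log 2 (real k) = r" and "0 < r" and "0 < n"
  shows "real k = 2 powr (real n * r)"
proof -
  have "k \<noteq> 0"
  proof
    assume "k = 0"
    with assms(1,2) show False by (simp add: log_def)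
  qed
  moreover have "log 2 (real k) = real n * r" using assms(1,3) by (simp add: field_simps)
  moreover have "2 powr (log 2 (real k)) = real k" using \<open>k \<noteq> 0\<close> by simp
  ultimately show ?thesis by simp
qed

lemma tendsto_two_powr_neg:
  assumes "c < 0"
  shows "(\<lambda>n. 2 powr (real n * c)) \<longlonglongrightarrow> 0"
proof -
  have "2 powr (real n * c) = (2 powr c) ^ n" for n
    by (simp add: powr_realpow[symmetric] powr_powr mult.commute)
  moreover have "(\<lambda>n. (2 powr c) ^ n) \<longlonglongrightarrow> 0"
    using assms by (intro LIMSEQ_power_zero) (simp add: powr_less_one)
  ultimately show ?thesis by simp
qed

lemma tendsto_excess:
  fixes jX jC \<alpha>A \<beta>A \<alpha>B \<beta>B :: "nat \<Rightarrow> real"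
  assumes "jX \<longlonglongrightarrow> 0" "jC \<longlonglongrightarrow> 0" "\<alpha>A \<longlonglongrightarrow> 1" "\<alpha>B \<longlonglongrightarrow> 1" "\<beta>A \<longlonglongrightarrow> 0" "\<beta>B \<longlonglongrightarrow> 0"
    and "c1 < 0" "c2 < 0" "0 < \<eta>"
  shows "(\<lambda>n. (jX n + \<beta>A n + \<beta>B n + \<bar>\<alpha>A n * \<alpha>B n\<bar> * 2 powr (real n * c1))
      + ((2 powr (real n * c2) * (1 + \<beta>A n) + \<bar>max (\<alpha>A n) 0 - 1\<bar>) / (2 * \<eta>) + \<eta> / 2
        + 2 * jC n)) \<longlonglongrightarrow> \<eta> / 2"
proof -
  have "(\<lambda>n. (jX n + \<beta>A n + \<beta>B n + \<bar>\<alpha>A n * \<alpha>B n\<bar> * 2 powr (real n * c1))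
      + ((2 powr (real n * c2) * (1 + \<beta>A n) + \<bar>max (\<alpha>A n) 0 - 1\<bar>) / (2 * \<eta>) + \<eta> / 2
        + 2 * jC n)) \<longlonglongrightarrow> (0 + 0 + 0 + \<bar>1 * 1\<bar> * 0)
           + ((0 * (1 + 0) + \<bar>max 1 0 - 1\<bar>) / (2 * \<eta>) + \<eta> / 2 + 2 * 0)"
    using assms tendsto_two_powr_neg[of c1] tendsto_two_powr_neg[of c2]
    by (intro tendsto_add tendsto_mult tendsto_divide tendsto_rabs tendsto_diff tendsto_max
              tendsto_const) simp_all
  then show ?thesis by simp
qed

subsection \<open>Error terms of the code\<close>

definition decoding_error :: "'y measure \<Rightarrow> nat \<Rightarrow> ('x list \<Rightarrow> 'y \<Rightarrow> real)
    \<Rightarrow> ('x list \<Rightarrow> 'a) \<Rightarrow> ('x list \<Rightarrow> 'b) \<Rightarrow> real" where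
  "decoding_error M n w A B = joint_prob M n w (\<lambda>x y. decoder M n w A B (A x) (B x) \<noteq> x)"

definition coset_imbalance :: "nat \<Rightarrow> ('x list \<Rightarrow> 'y \<Rightarrow> real) \<Rightarrow> 'a set \<Rightarrow> ('x list \<Rightarrow> 'a) \<Rightarrow> 'y \<Rightarrow> real" where
  "coset_imbalance n w I A y = (\<Sum>c\<in>I. \<bar>(\<Sum>x\<in>{x\<in>seqs n. A x = c}. w x y) - 1 / real (card I)\<bar>)"

definition code_error_given :: "'y measure \<Rightarrow> nat \<Rightarrow> ('x list \<Rightarrow> 'y \<Rightarrow> real)
    \<Rightarrow> ('x list \<Rightarrow> 'y \<Rightarrow> real) \<Rightarrow> ('x list \<Rightarrow> 'a) \<Rightarrow> ('x list \<Rightarrow> 'b) \<Rightarrow> 'a \<Rightarrow> real \<Rightarrow> 'y \<Rightarrow> real" where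
  "code_error_given M n w d A B c D y =
     (let Z = (\<Sum>x\<in>{x\<in>seqs n. A x = c}. w x y) in
      if Z = 0 then 1
      else (\<Sum>x\<in>{x\<in>seqs n. A x = c}. w x y / Z *
              (if d (decoder M n w A B c (B x)) y > D then 1 else 0)))"

lemma code_error_eq_integral:
  "code_error M n w d A B c D = (\<integral>y. code_error_given M n w d A B c D y \<partial>M)"
  unfolding code_error_def code_error_given_def ..

lemma decoder_wrong_imp_collision:
  fixes x :: "'x::finite list"
  assumes x: "x \<in> seqs n" and wrong: "decoder M n w A B (A x) (B x) \<noteq> x"
  shows "\<exists>x'\<in>{x'\<in>seqs n. marg M w x \<le> marg M w x'} - {x}. A x' = A x \<and> B x' = B x"
proof -
  define P where "P z \<longleftrightarrow> z \<in> seqs n \<and> A z = A x \<and> B z = B x" for z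
  have fin: "finite (Collect P)" unfolding P_def by (rule finite_subset[OF _ finite_seqs[of n]]) auto
  have "P x" using x by (simp add: P_def)
  obtain z where z: "P z" "\<And>y. P y \<Longrightarrow> marg M w y \<le> marg M w z"
    using Max_in[of "marg M w ` Collect P"] Max_ge[of "marg M w ` Collect P"] fin \<open>P x\<close> by fastforce
  have "P (arg_max (marg M w) P) \<and> marg M w x \<le> marg M w (arg_max (marg M w) P)"
    by (rule arg_maxI[where x=z]) (use z \<open>P x\<close> in \<open>auto simp: not_less\<close>)
  then show ?thesis using wrong unfolding decoder_def P_def[abs_def] by auto
qed

locale test_channel =
  fixes M :: "'y measure" and n :: nat and w :: "'x::finite list \<Rightarrow> 'y \<Rightarrow> real"
  assumes prob_space_M: "prob_space M"
    and w_measurable: "\<And>x. w x \<in> borel_measurable M"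
    and w_nonneg: "\<And>x y. y \<in> space M \<Longrightarrow> 0 \<le> w x y"
    and w_sum: "\<And>y. y \<in> space M \<Longrightarrow> (\<Sum>x\<in>seqs n. w x y) = 1"

sublocale test_channel \<subseteq> P: prob_space M by (rule prob_space_M)

context test_channel
begin

lemma weighted_indicator_sum_bounds:
  assumes "y \<in> space M"
  shows "0 \<le> (\<Sum>x\<in>seqs n. w x y * (if E x y then 1 else 0))"
    and "(\<Sum>x\<in>seqs n. w x y * (if E x y then 1 else 0)) \<le> 1"
proof -
  show "0 \<le> (\<Sum>x\<in>seqs n. w x y * (if E x y then 1 else 0))"
    using w_nonneg[OF assms] by (intro sum_nonneg) auto
  have "(\<Sum>x\<in>seqs n. w x y * (if E x y then 1 else 0)) \<le> (\<Sum>x\<in>seqs n. w x y)"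
    using w_nonneg[OF assms] by (intro sum_mono) auto
  then show "(\<Sum>x\<in>seqs n. w x y * (if E x y then 1 else 0)) \<le> 1" using w_sum[OF assms] by simp
qed

lemma integrable_weighted_indicator_sum:
  assumes "\<And>x. (\<lambda>y. if E x y then 1 else 0 :: real) \<in> borel_measurable M"
  shows "integrable M (\<lambda>y. \<Sum>x\<in>seqs n. w x y * (if E x y then 1 else 0))"
proof (rule P.integrable_const_bound[where B=1])
  show "(\<lambda>y. \<Sum>x\<in>seqs n. w x y * (if E x y then 1 else 0)) \<in> borel_measurable M"
    using w_measurable assms by measurable
qed (use weighted_indicator_sum_bounds in auto)

lemma integrable_w:
  assumes x: "x \<in> seqs n"
  shows "integrable M (w x)"
proof -
  have "w x y \<le> 1" if "y \<in> space M" for y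
    using w_sum[OF that] member_le_sum[OF x, of "\<lambda>x. w x y"] w_nonneg[OF that] by simp
  then show ?thesis
    by (intro P.integrable_const_bound[where B=1]) (auto simp: w_measurable w_nonneg)
qed

lemma marg_nonneg: "0 \<le> marg M w x"
  unfolding marg_def by (auto intro!: integral_nonneg_AE simp: w_nonneg)

lemma sum_marg: "(\<Sum>x\<in>seqs n. marg M w x) = 1"
proof -
  have "(\<Sum>x\<in>seqs n. marg M w x) = (\<integral>y. (\<Sum>x\<in>seqs n. w x y) \<partial>M)"
    unfolding marg_def by (rule Bochner_Integration.integral_sum[symmetric]) (rule integrable_w)
  also have "\<dots> = (\<integral>y. 1 \<partial>M)" by (rule Bochner_Integration.integral_cong) (auto simp: w_sum)
  finally show ?thesis using P.prob_space by simp
qed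

lemma joint_prob_eq_sum_marg:
  "joint_prob M n w (\<lambda>x y. E x) = (\<Sum>x\<in>seqs n. marg M w x * (if E x then 1 else 0))"
  unfolding joint_prob_def marg_def
  by (subst Bochner_Integration.integral_sum) (auto intro: integrable_w)

lemma joint_prob_mono:
  assumes "\<And>x. (\<lambda>y. if E x y then 1 else 0 :: real) \<in> borel_measurable M"
    and "\<And>x. (\<lambda>y. if F x y then 1 else 0 :: real) \<in> borel_measurable M"
    and "\<And>x y. x \<in> seqs n \<Longrightarrow> y \<in> space M \<Longrightarrow> 0 < w x y \<Longrightarrow> E x y \<Longrightarrow> F x y"
  shows "joint_prob M n w E \<le> joint_prob M n w F"
  unfolding joint_prob_def
proof (rule integral_mono[OF integrable_weighted_indicator_sum integrable_weighted_indicator_sum])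
  fix y assume y: "y \<in> space M"
  show "(\<Sum>x\<in>seqs n. w x y * (if E x y then 1 else 0)) \<le> (\<Sum>x\<in>seqs n. w x y * (if F x y then 1 else 0))"
    using assms(3)[OF _ y] w_nonneg[OF y] by (intro sum_mono) (fastforce simp: less_le)
qed (fact assms)+

lemma coset_imbalance_measurable: "coset_imbalance n w I A \<in> borel_measurable M"
  unfolding coset_imbalance_def using w_measurable by measurable

lemma coset_imbalance_bounds:
  assumes "finite I" "A ` seqs n \<subseteq> I" "y \<in> space M"
  shows "0 \<le> coset_imbalance n w I A y" "coset_imbalance n w I A y \<le> 2"
  unfolding coset_imbalance_def
  using sum_abs_coset_dev_le_2[OF finite_seqs assms(1,2), of "\<lambda>x. w x y"] w_nonneg w_sum assms(3)
  by (auto intro: sum_nonneg)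

lemma integrable_coset_imbalance:
  assumes "finite I" "A ` seqs n \<subseteq> I"
  shows "integrable M (coset_imbalance n w I A)"
  using coset_imbalance_bounds[OF assms]
  by (intro P.integrable_const_bound[where B=2] coset_imbalance_measurable) auto

lemma integral_coset_imbalance_bounds:
  assumes "finite I" "A ` seqs n \<subseteq> I"
  shows "0 \<le> (\<integral>y. coset_imbalance n w I A y \<partial>M)" "(\<integral>y. coset_imbalance n w I A y \<partial>M) \<le> 2"
  using coset_imbalance_bounds[OF assms]
  by (auto intro!: P.integral_ge_const P.integral_le_const integrable_coset_imbalance assms)

lemma decoding_error_bounds: "0 \<le> decoding_error M n w A B" "decoding_error M n w A B \<le> 1"
proof -
  have "decoding_error M n w A B \<le> (\<Sum>x\<in>seqs n. marg M w x)"
    unfolding decoding_error_def joint_prob_eq_sum_marg using marg_nonneg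
    by (intro sum_mono) (simp add: mult_left_le)
  then show "decoding_error M n w A B \<le> 1" using sum_marg by simp
  show "0 \<le> decoding_error M n w A B"
    unfolding decoding_error_def joint_prob_eq_sum_marg using marg_nonneg by (simp add: sum_nonneg)
qed

lemma integrable_code_error_given:
  assumes "\<And>x. d x \<in> borel_measurable M"
  shows "integrable M (code_error_given M n w d A B c D)"
proof (rule P.integrable_const_bound[where B=1])
  show "code_error_given M n w d A B c D \<in> borel_measurable M"
    unfolding code_error_given_def Let_def using w_measurable assms by measurable
  show "AE y in M. norm (code_error_given M n w d A B c D y) \<le> 1"
  proof (rule AE_I2)
    fix y assume "y \<in> space M"
    then have "0 \<le> code_error_given M n w d A B c D y \<and> code_error_given M n w d A B c D y \<le> 1"
      unfolding code_error_given_def by (intro normalized_average_bounds) (auto simp: w_nonneg)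
    then show "norm (code_error_given M n w d A B c D y) \<le> 1" by simp
  qed
qed

lemma average_code_error_given_le:
  assumes I: "finite I" "I \<noteq> {}" and AS: "A ` seqs n \<subseteq> I" and y: "y \<in> space M"
  shows "(\<Sum>c\<in>I. code_error_given M n w d A B c D y) / real (card I)
      \<le> (\<Sum>x\<in>seqs n. w x y * (if d x y > D then 1 else 0))
         + (\<Sum>x\<in>seqs n. w x y * (if decoder M n w A B (A x) (B x) \<noteq> x then 1 else 0))
         + coset_imbalance n w I A y"
proof -
  define H where "H c x = (if d (decoder M n w A B c (B x)) y > D then 1 else (0::real))" for c x
  have "(\<Sum>c\<in>I. code_error_given M n w d A B c D y) / real (card I)
      \<le> (\<Sum>x\<in>seqs n. w x y * H (A x) x) + coset_imbalance n w I A y"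
    unfolding code_error_given_def coset_imbalance_def H_def
    by (rule average_over_cosets_le[OF finite_seqs I AS]) (auto simp: w_nonneg[OF y])
  also have "(\<Sum>x\<in>seqs n. w x y * H (A x) x)
      \<le> (\<Sum>x\<in>seqs n. w x y * (if d x y > D then 1 else 0))
         + (\<Sum>x\<in>seqs n. w x y * (if decoder M n w A B (A x) (B x) \<noteq> x then 1 else 0))"
    unfolding sum.distrib[symmetric] H_def using w_nonneg[OF y]
    by (intro sum_mono) (auto simp: algebra_simps)
  finally show ?thesis by simp
qed

text \<open>Averaging over all coset indices \<open>c\<close> shows that some \<open>c\<close> makes the error of the stochastic
  encoder at most the distortion of the test channel plus the two error terms.\<close>
lemma exists_coset_code_error_le:
  fixes d :: "'x list \<Rightarrow> 'y \<Rightarrow> real" and I :: "'a set" and A :: "'x list \<Rightarrow> 'a"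
    and B :: "'x list \<Rightarrow> 'b"
  assumes d_meas: "\<And>x. d x \<in> borel_measurable M"
    and I: "finite I" "I \<noteq> {}" and AS: "A ` seqs n \<subseteq> I"
  shows "\<exists>c\<in>I. code_error M n w d A B c D
           \<le> joint_prob M n w (\<lambda>x y. d x y > D) + decoding_error M n w A B
              + (\<integral>y. coset_imbalance n w I A y \<partial>M)"
proof -
  have "(\<Sum>c\<in>I. code_error M n w d A B c D) / real (card I)
      = (\<integral>y. (\<Sum>c\<in>I. code_error_given M n w d A B c D y) / real (card I) \<partial>M)"
    unfolding code_error_eq_integral integral_divide_zero
    by (subst Bochner_Integration.integral_sum) (auto intro: integrable_code_error_given d_meas)
  also have "\<dots> \<le> (\<integral>y. (\<Sum>x\<in>seqs n. w x y * (if d x y > D then 1 else 0))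
         + (\<Sum>x\<in>seqs n. w x y * (if decoder M n w A B (A x) (B x) \<noteq> x then 1 else 0))
         + coset_imbalance n w I A y \<partial>M)"
    using d_meas average_code_error_given_le[OF I AS]
    by (intro integral_mono Bochner_Integration.integrable_add integrable_weighted_indicator_sum
              integrable_coset_imbalance[OF I(1) AS] Bochner_Integration.integrable_divide
              Bochner_Integration.integrable_sum integrable_code_error_given) auto
  also have "\<dots> = joint_prob M n w (\<lambda>x y. d x y > D) + decoding_error M n w A B
      + (\<integral>y. coset_imbalance n w I A y \<partial>M)"
    using d_meas integrable_coset_imbalance[OF I(1) AS]
    by (simp add: decoding_error_def joint_prob_def integrable_weighted_indicator_sum)
  finally show ?thesis using exists_le_average[OF I] by (meson order_trans)
qed

text \<open>A wrongly decoded \<open>x\<close> has a competitor \<open>x'\<close> in its bin that is at least as likely;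
  if \<open>\<mu>(x) > t\<close> there are fewer than \<open>1/t\<close> such competitors.\<close>
lemma prob_decoder_wrong_le:
  fixes pA :: "('x list \<Rightarrow> 'a) pmf" and pB :: "('x list \<Rightarrow> 'b) pmf"
  assumes x: "x \<in> seqs n" and t: "0 < t" "t < marg M w x"
    and hA: "collision_bounded pA (seqs n) qA bA" and hB: "collision_bounded pB (seqs n) qB bB"
  shows "measure_pmf.prob (pair_pmf pA pB) {(A,B). decoder M n w A B (A x) (B x) \<noteq> x}
           \<le> bA + bB + \<bar>qA * qB\<bar> / t"
proof -
  define G where "G = {x'\<in>seqs n. marg M w x \<le> marg M w x'}"
  have GS: "G \<subseteq> seqs n" unfolding G_def by auto
  have "real (card G) * marg M w x \<le> (\<Sum>x'\<in>G. marg M w x')"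
    using sum_bounded_below[of G "marg M w x" "marg M w"] by (auto simp: G_def)
  also have "\<dots> \<le> (\<Sum>x'\<in>seqs n. marg M w x')"
    using GS by (intro sum_mono2) (auto simp: marg_nonneg)
  finally have "real (card G) * t \<le> 1"
    using sum_marg t by (smt (verit) mult_left_mono of_nat_0_le_iff)
  then have "real (card G) \<le> 1 / t" using t by (simp add: field_simps)
  then have "real (card G) * \<bar>qA * qB\<bar> \<le> \<bar>qA * qB\<bar> / t"
    using mult_right_mono[of "real (card G)" "1 / t" "\<bar>qA * qB\<bar>"] by simp
  moreover have "measure_pmf.prob (pair_pmf pA pB) {(A,B). decoder M n w A B (A x) (B x) \<noteq> x}
      \<le> measure_pmf.prob (pair_pmf pA pB) {(A,B). \<exists>x'\<in>G-{x}. A x' = A x \<and> B x' = B x}"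
    using decoder_wrong_imp_collision[OF x] unfolding G_def
    by (intro measure_pmf.finite_measure_mono) auto
  moreover have "\<dots> \<le> bA + bB + real (card G) * \<bar>qA * qB\<bar>"
    by (rule prob_pair_collision_le[OF finite_seqs GS x hA hB])
  ultimately show ?thesis by linarith
qed

lemma expected_decoding_error_le:
  fixes pA :: "('x list \<Rightarrow> 'a) pmf" and pB :: "('x list \<Rightarrow> 'b) pmf"
  assumes hA: "collision_bounded pA (seqs n) qA bA" and hB: "collision_bounded pB (seqs n) qB bB"
    and t: "0 < t"
  shows "measure_pmf.expectation (pair_pmf pA pB) (\<lambda>(A,B). decoding_error M n w A B)
     \<le> joint_prob M n w (\<lambda>x y. 0 < marg M w x \<and> marg M w x \<le> t) + (bA + bB + \<bar>qA * qB\<bar> / t)"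
proof -
  define Q where "Q = pair_pmf pA pB"
  define wrong where "wrong x = measure_pmf.prob Q {(A,B). decoder M n w A B (A x) (B x) \<noteq> x}" for x
  define \<epsilon> where "\<epsilon> = bA + bB + \<bar>qA * qB\<bar> / t"
  have "0 \<le> \<epsilon>"
    using collision_bounded_nonneg[OF hA seqs_not_empty] collision_bounded_nonneg[OF hB seqs_not_empty] t
    by (simp add: \<epsilon>_def)
  have per_x: "marg M w x * wrong x \<le> marg M w x * ((if 0 < marg M w x \<and> marg M w x \<le> t then 1 else 0) + \<epsilon>)"
    if x: "x \<in> seqs n" for x
  proof (cases "t < marg M w x")
    case True
    then show ?thesis
      using prob_decoder_wrong_le[OF x t True hA hB] marg_nonneg
      by (simp add: wrong_def Q_def \<epsilon>_def mult_left_mono)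
  next
    case False
    have "wrong x \<le> 1" by (simp add: wrong_def)
    then show ?thesis
      using False marg_nonneg[of x] \<open>0 \<le> \<epsilon>\<close> by (auto simp: less_le intro!: mult_left_mono)
  qed
  have "measure_pmf.expectation Q (\<lambda>(A,B). decoding_error M n w A B)
      = (\<Sum>x\<in>seqs n. measure_pmf.expectation Q
           (\<lambda>ab. marg M w x * (if decoder M n w (fst ab) (snd ab) (fst ab x) (snd ab x) \<noteq> x then 1 else 0)))"
    unfolding decoding_error_def joint_prob_eq_sum_marg case_prod_unfold
    by (intro Bochner_Integration.integral_sum Bochner_Integration.integrable_mult_right
              integrable_measure_pmf_bounded[where C=1]) auto
  also have "\<dots> = (\<Sum>x\<in>seqs n. marg M w x * wrong x)"
    unfolding wrong_def by (simp add: expectation_pmf_indicator case_prod_unfold)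
  also have "\<dots> \<le> (\<Sum>x\<in>seqs n. marg M w x * ((if 0 < marg M w x \<and> marg M w x \<le> t then 1 else 0) + \<epsilon>))"
    by (intro sum_mono per_x)
  also have "\<dots> = joint_prob M n w (\<lambda>x y. 0 < marg M w x \<and> marg M w x \<le> t) + \<epsilon>"
    by (simp add: joint_prob_eq_sum_marg distrib_left sum.distrib sum_distrib_right[symmetric] sum_marg)
  finally show ?thesis unfolding Q_def \<epsilon>_def .
qed

lemma expected_coset_imbalance_le:
  fixes pA :: "('x list \<Rightarrow> 'a) pmf" and I :: "'a set"
  assumes hA: "collision_bounded pA (seqs n) q b"
    and I: "finite I" "card I > 0" and AS: "\<And>A. A \<in> set_pmf pA \<Longrightarrow> A ` seqs n \<subseteq> I"
    and \<eta>: "0 < \<eta>" and s: "0 \<le> s"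
  shows "measure_pmf.expectation pA (\<lambda>A. \<integral>y. coset_imbalance n w I A y \<partial>M)
     \<le> (real (card I) * s * (1 + b) + \<bar>real (card I) * max q 0 - 1\<bar>) / (2 * \<eta>) + \<eta> / 2
        + 2 * joint_prob M n w (\<lambda>x y. w x y > s)"
proof -
  define K where "K = (real (card I) * s * (1 + b) + \<bar>real (card I) * max q 0 - 1\<bar>) / (2 * \<eta>) + \<eta> / 2"
  define G where "G y = (\<Sum>x\<in>seqs n. w x y * (if w x y > s then 1 else 0))" for y
  have bnd: "\<bar>coset_imbalance n w I A y\<bar> \<le> 2" if "A \<in> set_pmf pA" "y \<in> space M" for A y
    using coset_imbalance_bounds[OF I(1) AS[OF that(1)] that(2)] by simp
  note Fubini = pmf_Fubini[OF prob_space_M coset_imbalance_measurable bnd]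
  have Gint: "integrable M G"
    unfolding G_def using w_measurable by (intro integrable_weighted_indicator_sum) measurable
  have "measure_pmf.expectation pA (\<lambda>A. \<integral>y. coset_imbalance n w I A y \<partial>M)
      = (\<integral>y. measure_pmf.expectation pA (\<lambda>A. coset_imbalance n w I A y) \<partial>M)"
    by (rule Fubini(2))
  also have "\<dots> \<le> (\<integral>y. K + 2 * G y \<partial>M)"
  proof (rule integral_mono[OF Fubini(1)])
    show "integrable M (\<lambda>y. K + 2 * G y)" using Gint by simp
    show "measure_pmf.expectation pA (\<lambda>A. coset_imbalance n w I A y) \<le> K + 2 * G y"
      if "y \<in> space M" for y
      unfolding K_def G_def coset_imbalance_def
      by (rule expected_sum_abs_coset_dev_le[OF finite_seqs I AS _ _ hA \<eta> s])
         (use w_nonneg w_sum that in auto)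
  qed
  also have "\<dots> = K + 2 * (\<integral>y. G y \<partial>M)"
    using Gint P.prob_space by simp
  also have "(\<integral>y. G y \<partial>M) = joint_prob M n w (\<lambda>x y. w x y > s)"
    unfolding G_def joint_prob_def ..
  finally show ?thesis unfolding K_def .
qed

text \<open>The random-coding argument: the expected excess error over a random pair \<open>(A, B)\<close>
  is small, so some pair in the support achieves it.\<close>
lemma exists_good_code:
  fixes d :: "'x list \<Rightarrow> 'y \<Rightarrow> real"
    and FA :: "('x list \<Rightarrow> 'a) set" and pA :: "('x list \<Rightarrow> 'a) pmf"
    and FB :: "('x list \<Rightarrow> 'b) set" and pB :: "('x list \<Rightarrow> 'b) pmf"
  assumes suppA: "set_pmf pA \<subseteq> FA" and suppB: "set_pmf pB \<subseteq> FB"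
    and hA: "collision_bounded pA (seqs n) qA bA" and hB: "collision_bounded pB (seqs n) qB bB"
    and card: "card (img FA n) > 0" and \<eta>: "0 < \<eta>" and s: "0 \<le> s" and t: "0 < t"
    and d_meas: "\<And>x. d x \<in> borel_measurable M"
  shows "\<exists>A\<in>FA. \<exists>B\<in>FB. \<exists>c\<in>img FA n. code_error M n w d A B c D
           \<le> joint_prob M n w (\<lambda>x y. d x y > D)
              + (joint_prob M n w (\<lambda>x y. 0 < marg M w x \<and> marg M w x \<le> t) + (bA + bB + \<bar>qA * qB\<bar> / t))
              + ((real (card (img FA n)) * s * (1 + bA) + \<bar>real (card (img FA n)) * max qA 0 - 1\<bar>) / (2 * \<eta>)
                 + \<eta> / 2 + 2 * joint_prob M n w (\<lambda>x y. w x y > s))"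
proof -
  define I where "I = img FA n"
  have I: "finite I" "card I > 0" "I \<noteq> {}" using card by (auto simp: I_def card_gt_0_iff)
  have AS: "A ` seqs n \<subseteq> I" if "A \<in> FA" for A
    using that unfolding I_def img_def by auto
  define Q where "Q = pair_pmf pA pB"
  define f :: "('x list \<Rightarrow> 'a) \<times> ('x list \<Rightarrow> 'b) \<Rightarrow> real"
    where "f = (\<lambda>(A,B). decoding_error M n w A B + (\<integral>y. coset_imbalance n w I A y \<partial>M))"
  have imb_bnd: "\<bar>\<integral>y. coset_imbalance n w I A y \<partial>M\<bar> \<le> 2" if "A \<in> set_pmf pA" for A
    using integral_coset_imbalance_bounds[OF I(1)] that suppA AS by fastforce
  have int_dec: "integrable Q (\<lambda>(A,B). decoding_error M n w A B)"
  proof (rule integrable_measure_pmf_bounded[where C=1])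
    fix AB :: "('x list \<Rightarrow> 'a) \<times> ('x list \<Rightarrow> 'b)"
    show "\<bar>case AB of (A, B) \<Rightarrow> decoding_error M n w A B\<bar> \<le> 1"
      using decoding_error_bounds[of "fst AB" "snd AB"] by (simp add: case_prod_unfold)
  qed
  have int_imb: "integrable Q (\<lambda>(A,B). \<integral>y. coset_imbalance n w I A y \<partial>M)"
    by (rule integrable_measure_pmf_bounded[where C=2]) (auto simp: Q_def imb_bnd)
  have "measure_pmf.expectation Q f
      = measure_pmf.expectation Q (\<lambda>(A,B). decoding_error M n w A B)
        + measure_pmf.expectation pA (\<lambda>A. \<integral>y. coset_imbalance n w I A y \<partial>M)"
    using int_dec int_imb expectation_pair_pmf_fst[of pA pB "\<lambda>A. \<integral>y. coset_imbalance n w I A y \<partial>M"]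
    by (simp add: f_def case_prod_unfold Q_def)
  also have "\<dots> \<le> (joint_prob M n w (\<lambda>x y. 0 < marg M w x \<and> marg M w x \<le> t) + (bA + bB + \<bar>qA * qB\<bar> / t))
      + ((real (card I) * s * (1 + bA) + \<bar>real (card I) * max qA 0 - 1\<bar>) / (2 * \<eta>)
         + \<eta> / 2 + 2 * joint_prob M n w (\<lambda>x y. w x y > s))"
    using suppA AS unfolding Q_def
    by (intro add_mono expected_decoding_error_le[OF hA hB t]
              expected_coset_imbalance_le[OF hA I(1,2) _ \<eta> s]) auto
  finally have Ef: "measure_pmf.expectation Q f \<le> \<dots>" .
  obtain A B where AB: "(A, B) \<in> set_pmf Q" "f (A, B) \<le> measure_pmf.expectation Q f"
    using measure_pmf_exists_le_expectation[of Q f] int_dec int_imb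
    unfolding f_def by (auto simp: case_prod_unfold)
  then have "A \<in> FA" "B \<in> FB" using suppA suppB by (auto simp: Q_def)
  obtain c where "c \<in> I"
    and "code_error M n w d A B c D \<le> joint_prob M n w (\<lambda>x y. d x y > D) + f (A, B)"
    using exists_coset_code_error_le[where d=d and B=B and D=D, OF d_meas I(1,3) AS[OF \<open>A \<in> FA\<close>]]
    by (auto simp: f_def add.assoc)
  with AB(2) Ef \<open>A \<in> FA\<close> \<open>B \<in> FB\<close> show ?thesis unfolding I_def by (intro bexI) auto
qed

lemma joint_prob_light_le:
  assumes "0 < n" "\<theta> < \<theta>'"
  shows "joint_prob M n w (\<lambda>x y. 0 < marg M w x \<and> marg M w x \<le> 2 powr (- (real n * \<theta>')))
      \<le> joint_prob M n w (\<lambda>x y. 1 / real n * log 2 (1 / marg M w x) > \<theta>)"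
proof (rule joint_prob_mono)
  fix x y assume "0 < marg M w x \<and> marg M w x \<le> 2 powr (- (real n * \<theta>'))"
  then show "1 / real n * log 2 (1 / marg M w x) > \<theta>"
    using assms by (intro log_inverse_gt_of_le_powr) auto
qed simp_all

lemma joint_prob_heavy_le:
  assumes "0 < n" "\<theta>' < \<theta>"
  shows "joint_prob M n w (\<lambda>x y. w x y > 2 powr (- (real n * \<theta>')))
      \<le> joint_prob M n w (\<lambda>x y. 1 / real n * log 2 (1 / w x y) < \<theta>)"
proof (rule joint_prob_mono)
  show "(\<lambda>y. if w x y > 2 powr (- (real n * \<theta>')) then 1 else 0 :: real) \<in> borel_measurable M" for x
    using w_measurable[of x] by measurable
  show "(\<lambda>y. if 1 / real n * log 2 (1 / w x y) < \<theta> then 1 else 0 :: real) \<in> borel_measurable M" for x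
    using w_measurable[of x] by measurable
qed (use assms log_inverse_less_of_powr_less in blast)

text \<open>With the thresholds \<open>s = 2 powr (- n \<theta>\<^sub>1)\<close> and \<open>t = 2 powr (- n \<theta>\<^sub>2)\<close> every error term
  becomes a spectral-entropy tail probability or decays exponentially in \<open>n\<close>.\<close>
lemma exists_good_code_at_rates:
  fixes d :: "'x list \<Rightarrow> 'y \<Rightarrow> real"
    and FA :: "('x list \<Rightarrow> 'a) set" and pA :: "('x list \<Rightarrow> 'a) pmf"
    and FB :: "('x list \<Rightarrow> 'b) set" and pB :: "('x list \<Rightarrow> 'b) pmf"
  assumes suppA: "set_pmf pA \<subseteq> FA" and suppB: "set_pmf pB \<subseteq> FB"
    and hA: "collision_bounded pA (seqs n) (\<alpha>A / real (card (img FA n))) \<beta>A"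
    and hB: "collision_bounded pB (seqs n) (\<alpha>B / real (card (img FB n))) \<beta>B"
    and n: "0 < n"
    and rateA: "1 / real n * log 2 (real (card (img FA n))) = r" and "0 < r"
    and rateB: "1 / real n * log 2 (real (card (img FB n))) = R" and "0 < R"
    and \<theta>x: "\<theta>x < \<theta>2" and \<theta>c: "\<theta>1 < \<theta>c" and \<eta>: "0 < \<eta>"
    and d_meas: "\<And>x. d x \<in> borel_measurable M"
  shows "\<exists>A\<in>FA. \<exists>B\<in>FB. \<exists>c\<in>img FA n. code_error M n w d A B c D
           \<le> joint_prob M n w (\<lambda>x y. d x y > D)
              + (joint_prob M n w (\<lambda>x y. 1 / real n * log 2 (1 / marg M w x) > \<theta>x)
                 + \<beta>A + \<beta>B + \<bar>\<alpha>A * \<alpha>B\<bar> * 2 powr (real n * (\<theta>2 - r - R)))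
              + ((2 powr (real n * (r - \<theta>1)) * (1 + \<beta>A) + \<bar>max \<alpha>A 0 - 1\<bar>) / (2 * \<eta>) + \<eta> / 2
                 + 2 * joint_prob M n w (\<lambda>x y. 1 / real n * log 2 (1 / w x y) < \<theta>c))"
proof -
  have cardA: "real (card (img FA n)) = 2 powr (real n * r)"
    and cardB: "real (card (img FB n)) = 2 powr (real n * R)"
    using card_eq_powr_rate n rateA rateB \<open>0 < r\<close> \<open>0 < R\<close> by blast+
  define mA where "mA = real (card (img FA n))"
  define mB where "mB = real (card (img FB n))"
  define s where "s = 2 powr (- (real n * \<theta>1))"
  define t where "t = 2 powr (- (real n * \<theta>2))"
  have "0 < mA" "0 < mB" by (simp_all add: mA_def mB_def cardA cardB)
  have "mA * mB * t * 2 powr (real n * (\<theta>2 - r - R))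
      = 2 powr (real n * r + real n * R + - (real n * \<theta>2) + real n * (\<theta>2 - r - R))"
    unfolding mA_def mB_def cardA cardB t_def powr_add ..
  also have "\<dots> = 1" by (simp add: algebra_simps)
  finally have collisions: "\<bar>\<alpha>A / mA * (\<alpha>B / mB)\<bar> / t = \<bar>\<alpha>A * \<alpha>B\<bar> * 2 powr (real n * (\<theta>2 - r - R))"
    using \<open>0 < mA\<close> \<open>0 < mB\<close> by (simp add: t_def abs_mult field_simps)
  have rate: "mA * s = 2 powr (real n * (r - \<theta>1))"
    by (simp add: mA_def cardA s_def powr_add[symmetric] algebra_simps)
  have scale: "mA * max (\<alpha>A / mA) 0 = max \<alpha>A 0"
    using \<open>0 < mA\<close> by (simp add: max_def field_simps)
  obtain A B c where "A \<in> FA" "B \<in> FB" "c \<in> img FA n"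
    and "code_error M n w d A B c D
           \<le> joint_prob M n w (\<lambda>x y. d x y > D)
              + (joint_prob M n w (\<lambda>x y. 0 < marg M w x \<and> marg M w x \<le> t)
                 + (\<beta>A + \<beta>B + \<bar>\<alpha>A / mA * (\<alpha>B / mB)\<bar> / t))
              + ((mA * s * (1 + \<beta>A) + \<bar>mA * max (\<alpha>A / mA) 0 - 1\<bar>) / (2 * \<eta>)
                 + \<eta> / 2 + 2 * joint_prob M n w (\<lambda>x y. w x y > s))"
    using exists_good_code[where d=d and s=s and t=t and D=D, OF suppA suppB hA hB _ \<eta> _ _ d_meas]
      \<open>0 < mA\<close> unfolding mA_def mB_def s_def t_def by auto
  with joint_prob_light_le[OF n \<theta>x, folded t_def] joint_prob_heavy_le[OF n \<theta>c, folded s_def]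
  show ?thesis unfolding collisions rate scale by (intro bexI) auto
qed

end

theorem theorem2:
  fixes PY :: "nat \<Rightarrow> 'y measure"
    and W :: "nat \<Rightarrow> ('x::finite) list \<Rightarrow> 'y \<Rightarrow> real"
    and d :: "nat \<Rightarrow> 'x list \<Rightarrow> 'y \<Rightarrow> real"
    and D r R :: real
    and FA :: "nat \<Rightarrow> ('x list \<Rightarrow> 'a) set" and pA :: "nat \<Rightarrow> ('x list \<Rightarrow> 'a) pmf"
    and FB :: "nat \<Rightarrow> ('x list \<Rightarrow> 'b) set" and pB :: "nat \<Rightarrow> ('x list \<Rightarrow> 'b) pmf"
  assumes PY: "\<And>n. prob_space (PY n)"
    and W_meas: "\<And>n x. W n x \<in> borel_measurable (PY n)"
    and W_nonneg: "\<And>n x y. y \<in> space (PY n) \<Longrightarrow> W n x y \<ge> 0"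
    and W_sum: "\<And>n y. y \<in> space (PY n) \<Longrightarrow> (\<Sum>x\<in>seqs n. W n x y) = 1"
    and d_meas: "\<And>n x. d n x \<in> borel_measurable (PY n)"
    and d_nonneg: "\<And>n x y. d n x y \<ge> 0"
    and D: "D \<ge> 0"
    and ensA: "ensemble FA pA" and hashA: "hash_property FA pA"
    and ensB: "ensemble FB pB" and hashB: "hash_property FB pB"
    and rateA: "\<And>n. n \<ge> 1 \<Longrightarrow> 1 / real n * log 2 (real (card (img (FA n) n))) = r"
    and rateB: "\<And>n. n \<ge> 1 \<Longrightarrow> 1 / real n * log 2 (real (card (img (FB n) n))) = R"
    and r_pos: "r > 0" and R_pos: "R > 0"
    and r_lt: "ereal r < inf_cond_entropy PY W"
    and rR_gt: "sup_entropy PY W < ereal (r + R)"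
  shows "\<forall>\<delta>>0. \<forall>\<^sub>F n in sequentially. \<exists>A\<in>FA n. \<exists>B\<in>FB n. \<exists>c\<in>img (FA n) n.
           code_error (PY n) n (W n) (d n) A B c D
             \<le> joint_prob (PY n) n (W n) (\<lambda>x y. d n x y > D) + \<delta>"
proof (intro allI impI)
  fix \<delta> :: real assume "0 < \<delta>"
  obtain \<alpha>A \<beta>A where \<alpha>A: "\<alpha>A \<longlonglongrightarrow> 1" and \<beta>A: "\<beta>A \<longlonglongrightarrow> 0"
    and hA: "\<And>n. collision_bounded (pA n) (seqs n) (\<alpha>A n / real (card (img (FA n) n))) (\<beta>A n)"
    using hashA unfolding hash_property_iff by blast
  obtain \<alpha>B \<beta>B where \<alpha>B: "\<alpha>B \<longlonglongrightarrow> 1" and \<beta>B: "\<beta>B \<longlonglongrightarrow> 0"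
    and hB: "\<And>n. collision_bounded (pB n) (seqs n) (\<alpha>B n / real (card (img (FB n) n))) (\<beta>B n)"
    using hashB unfolding hash_property_iff by blast
  obtain \<theta>c where "r < \<theta>c" and jC: "(\<lambda>n. joint_prob (PY n) n (W n)
      (\<lambda>x y. 1 / real n * log 2 (1 / W n x y) < \<theta>c)) \<longlonglongrightarrow> 0"
    using r_lt by (auto simp: inf_cond_entropy_def less_SUP_iff)
  obtain \<theta>x where "\<theta>x < r + R" and jX: "(\<lambda>n. joint_prob (PY n) n (W n)
      (\<lambda>x y. 1 / real n * log 2 (1 / marg (PY n) (W n) x) > \<theta>x)) \<longlonglongrightarrow> 0"
    using rR_gt by (auto simp: sup_entropy_def INF_less_iff)
  define \<theta>1 where "\<theta>1 = (r + \<theta>c) / 2"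
  define \<theta>2 where "\<theta>2 = (\<theta>x + r + R) / 2"
  define \<eta> where "\<eta> = \<delta> / 4"
  have thresholds: "\<theta>x < \<theta>2" "\<theta>2 < r + R" "r < \<theta>1" "\<theta>1 < \<theta>c" and "0 < \<eta>"
    using \<open>\<theta>x < r + R\<close> \<open>r < \<theta>c\<close> \<open>0 < \<delta>\<close> by (simp_all add: \<theta>1_def \<theta>2_def \<eta>_def field_simps)
  define excess where "excess n =
      (joint_prob (PY n) n (W n) (\<lambda>x y. 1 / real n * log 2 (1 / marg (PY n) (W n) x) > \<theta>x)
        + \<beta>A n + \<beta>B n + \<bar>\<alpha>A n * \<alpha>B n\<bar> * 2 powr (real n * (\<theta>2 - r - R)))
      + ((2 powr (real n * (r - \<theta>1)) * (1 + \<beta>A n) + \<bar>max (\<alpha>A n) 0 - 1\<bar>) / (2 * \<eta>) + \<eta> / 2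
        + 2 * joint_prob (PY n) n (W n) (\<lambda>x y. 1 / real n * log 2 (1 / W n x y) < \<theta>c))" for n
  have "excess \<longlonglongrightarrow> \<eta> / 2"
    unfolding excess_def
    by (rule tendsto_excess[OF jX jC \<alpha>A \<alpha>B \<beta>A \<beta>B]) (use thresholds \<open>0 < \<eta>\<close> in simp_all)
  then have "\<forall>\<^sub>F n in sequentially. excess n < \<delta>"
    by (rule order_tendstoD) (use \<open>0 < \<delta>\<close> in \<open>simp add: \<eta>_def\<close>)
  then show "\<forall>\<^sub>F n in sequentially. \<exists>A\<in>FA n. \<exists>B\<in>FB n. \<exists>c\<in>img (FA n) n.
      code_error (PY n) n (W n) (d n) A B c D \<le> joint_prob (PY n) n (W n) (\<lambda>x y. d n x y > D) + \<delta>"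
    using eventually_gt_at_top[of 0]
  proof eventually_elim
    case (elim n)
    interpret test_channel "PY n" n "W n" by (rule test_channel.intro[OF PY W_meas W_nonneg W_sum])
    have "set_pmf (pA n) \<subseteq> FA n" "set_pmf (pB n) \<subseteq> FB n"
      using ensA ensB by (auto simp: ensemble_def)
    then obtain A B c where ABc: "A \<in> FA n" "B \<in> FB n" "c \<in> img (FA n) n"
      and "code_error (PY n) n (W n) (d n) A B c D
             \<le> joint_prob (PY n) n (W n) (\<lambda>x y. d n x y > D) + excess n"
      using exists_good_code_at_rates[where d="d n" and D=D, OF _ _ hA hB elim(2)
              rateA r_pos rateB R_pos thresholds(1,4) \<open>0 < \<eta>\<close> d_meas] elim(2)
      unfolding excess_def add.assoc by fastforce
    with elim(1) show ?case by (intro bexI[OF _ ABc(1)] bexI[OF _ ABc(2)] bexI[OF _ ABc(3)]) simp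
  qed
qed

end
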